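(* Let $q$ be a prime power and let $n, r, d$ be integers with $1 \le d \le r \le n/2$. Let $\mathcal{E}^0 \subseteq E_r(q,n)$ be the lifting $\{I({\bf C}) : {\bf C} \in \mathcal{M}\}$ of an MRD code $\mathcal{M} \subseteq \mathrm{GF}(q)^{r \times (n-r)}$ with minimum rank distance $d$ and cardinality $q^{(n-r)(r-d+1)}$. For $1 \le k \le \lfloor r/d \rfloor$ let: - $\mathcal{C}^k \subseteq \mathrm{GF}(q)^{(r-kd)\times kd}$ be an MRD code with minimum rank distance $d$ if $k \le \lfloor r/d\rfloor - 1$, and $\mathcal{C}^{\lfloor r/d \rfloor} = \{{\bf 0}\} \subseteq \mathrm{GF}(q)^{(r - \lfloor r/d\rfloor d)\times \lfloor r/d \rfloor d}$; - $\mathcal{D}^k \subseteq \mathrm{GF}(q)^{r \times (n-r-kd)}$ be an MRD code with minimum rank distance $d$ if $k \le \lfloor (n-r)/d \rfloor - 1$, and $\mathcal{D}^{\lfloor (n-r)/d\rfloor} = \{{\bf 0}\}\subseteq \mathrm{GF}(q)^{r \times (n-r-\lfloor (n-r)/d\rfloor d)}$ (when $\lfloor (n-r)/d\rfloor = \lfloor r/d \rfloor$, this is the case $k = \lfloor r/d\rfloor$). For ${\bf C} \in \mathcal{C}^k$ and ${\bf D} \in \mathcal{D}^k$, write ${\bf D} = \begin{pmatrix} {\bf D}' \\ {\bf D}''\end{pmatrix}$ with ${\bf D}'$ consisting of the first $r-kd$ rows and ${\bf D}''$ of the last $kd$ rows, and let $E^k_{{\bf C},{\bf D}} \in E_r(q,n)$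 be the row space of the $r\times n$ matrix $$\begin{pmatrix} {\bf I}_{r-kd} & {\bf C} & {\bf 0}_{(r-kd)\times kd} & {\bf D}' \\ {\bf 0}_{kd \times (r-kd)} & {\bf 0}_{kd\times kd} & {\bf I}_{kd} & {\bf D}'' \end{pmatrix}.$$ Let $\mathcal{E}^k = \{E^k_{{\bf C},{\bf D}} : {\bf C} \in \mathcal{C}^k, {\bf D}\in \mathcal{D}^k\}$ and $\mathcal{E} = \bigcup_{k=0}^{\lfloor r/d\rfloor} \mathcal{E}^k$. Then $\mathcal{E}$ has minimum injection distance $d$, i.e. the minimum of $d_{\mathrm{I}}(U,V)$ over distinct $U,V \in \mathcal{E}$ equals $d$.
   Context: $E_r(q,n)$ is the set of $r$-dimensional subspaces of $\mathrm{GF}(q)^n$. For a matrix ${\bf M}$, $R({\bf M})$ is its row space; for ${\bf C} \in \mathrm{GF}(q)^{r\times(n-r)}$ the lifting is $I({\bf C}) = R({\bf I}_r \mid {\bf C}) \in E_r(q,n)$. The injection distance is $d_{\mathrm{I}}(U,V) = \dim(U+V) - \min\{\dim U,\dim V\}$. The rank distance between matrices is $d_{\mathrm{R}}({\bf C},{\bf D}) = \mathrm{rk}({\bf C}-{\bf D})$. An MRD code in $\mathrm{GF}(q)^{m\times N}$ with minimum rank distance $d$ is a set of matrices with minimum rank distance $d$ and the maximum possible cardinality $\min\{q^{m(N-d+1)}, q^{N(m-d+1)}\}$. *)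

theory Defs
  imports "Jordan_Normal_Form.DL_Rank"
begin

text \<open>The field GF(q) is modelled by a finite field type 'a :: {field, finite}, q = card (UNIV :: 'a set).
  Vectors of GF(q)^n are elements of carrier_vec n; matrices are 'a mat.\<close>

definition hcat :: "'a::zero mat \<Rightarrow> 'a mat \<Rightarrow> 'a mat" where
  "hcat A B = mat (dim_row A) (dim_col A + dim_col B)
     (\<lambda>(i,j). if j < dim_col A then A $$ (i,j) else B $$ (i, j - dim_col A))"

definition top_rows :: "nat \<Rightarrow> 'a mat \<Rightarrow> 'a mat" where
  "top_rows a D = mat a (dim_col D) (\<lambda>(i,j). D $$ (i,j))"
definition bottom_rows :: "nat \<Rightarrow> 'a mat \<Rightarrow> 'a mat" where
  "bottom_rows b D = mat b (dim_col D) (\<lambda>(i,j). D $$ (i + (dim_row D - b), j))"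

definition row_sp :: "'a::field mat \<Rightarrow> 'a vec set" where
  "row_sp M = vec_space.row_space (dim_col M) M"

definition sub_dim :: "nat \<Rightarrow> 'a::field vec set \<Rightarrow> nat" where
  "sub_dim n W = vectorspace.dim (class_ring :: 'a ring) ((module_vec TYPE('a) n)\<lparr>carrier := W\<rparr>)"

definition sub_sum :: "'a::field vec set \<Rightarrow> 'a vec set \<Rightarrow> 'a vec set" where
  "sub_sum U V = {u + v | u v. u \<in> U \<and> v \<in> V}"

definition inj_dist :: "nat \<Rightarrow> 'a::field vec set \<Rightarrow> 'a vec set \<Rightarrow> nat" where
  "inj_dist n U V = sub_dim n (sub_sum U V) - min (sub_dim n U) (sub_dim n V)"

definition mrank :: "'a::field mat \<Rightarrow> nat" where
  "mrank A = vec_space.rank (dim_row A) A"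

definition rank_dist :: "'a::field mat \<Rightarrow> 'a mat \<Rightarrow> nat" where
  "rank_dist C D = mrank (C - D)"

definition min_rank_dist :: "'a::field mat set \<Rightarrow> nat" where
  "min_rank_dist M = Min {rank_dist C D | C D. C \<in> M \<and> D \<in> M \<and> C \<noteq> D}"

definition min_inj_dist :: "nat \<Rightarrow> 'a::field vec set set \<Rightarrow> nat" where
  "min_inj_dist n E = Min {inj_dist n U V | U V. U \<in> E \<and> V \<in> E \<and> U \<noteq> V}"

definition is_MRD :: "nat \<Rightarrow> nat \<Rightarrow> nat \<Rightarrow> 'a::{field,finite} mat set \<Rightarrow> bool" where
  "is_MRD m N d M \<longleftrightarrow> M \<subseteq> carrier_mat m N \<and> min_rank_dist M = d \<and>
     card M = min (card (UNIV :: 'a set) ^ (m * (N - d + 1))) (card (UNIV :: 'a set) ^ (N * (m - d + 1)))"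

definition lift :: "'a::field mat \<Rightarrow> 'a vec set" where
  "lift C = row_sp (hcat (1\<^sub>m (dim_row C)) C)"

text \<open>E^k_{C,D}, with a = r - kd and b = kd.\<close>
definition Ek_space :: "nat \<Rightarrow> nat \<Rightarrow> 'a::field mat \<Rightarrow> 'a mat \<Rightarrow> 'a vec set" where
  "Ek_space a b C D = row_sp
     (hcat (hcat (hcat (1\<^sub>m a) C) (0\<^sub>m a b)) (top_rows a D)
      @\<^sub>r hcat (hcat (hcat (0\<^sub>m b a) (0\<^sub>m b b)) (1\<^sub>m b)) (bottom_rows b D))"

end

theory Submission
  imports Defs
begin

text \<open>Every member of the code is the row space of an r \<times> n matrix that is the identity on r pivot
  columns: for E^k the columns of I_{r-kd} and I_{kd}, for a lifting (the case k = 0) the first r.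
  If U = R(G) and V = R(G') are distinct, the rows of G together with vectors of U + V vanishing on the
  pivot columns of G give dim (U + V) \<ge> r + d. On the same level k these vectors are the rows of
  G' - G, whose rank is at least that of C' - C and of D' - D, hence at least d by the MRD property;
  on levels k < l they are the last (l - k)d rows of G', which carry an identity block of their own.
  Since dim U, dim V \<le> r, this gives d_I(U, V) \<ge> d, and two liftings of MRD codewords at rank
  distance d attain d_I = d.\<close>

context vec_space
begin

lemma sub_dim_eq_dim_vs: "sub_dim n W = vectorspace.dim class_ring (vs W)"
  by (simp add: sub_dim_def)

lemma sub_sum_span:
  assumes "S \<subseteq> carrier_vec n" "T \<subseteq> carrier_vec n"
  shows "sub_sum (span S) (span T) = span (S \<union> T)"
  using span_union_is_sum[of S T] assms unfolding sub_sum_def submodule_sum_def by auto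

lemma span_minus:
  assumes S: "S \<subseteq> carrier_vec n" and "v \<in> span S" "w \<in> span S"
  shows "v - w \<in> span S"
proof -
  have vw: "v \<in> carrier_vec n" "w \<in> carrier_vec n" using span_closed[OF S] assms by auto
  then have "- w \<in> span S" using span_neg[OF S assms(3)] by simp
  then have "v + - w \<in> span S" using span_add1[OF S assms(2)] by simp
  then show ?thesis using vw by (simp add: minus_add_uminus_vec)
qed

lemma sub_dim_span_le_card:
  assumes "finite S" "S \<subseteq> carrier_vec n"
  shows "sub_dim n (span S) \<le> card S"
proof -
  interpret W: vectorspace class_ring "vs (span S)"
    using span_is_subspace subspace_is_vs assms by simp
  have S: "S \<subseteq> span S" using in_own_span assms by simp
  have "W.span S = span S"
    using span_li_not_depend(1)[OF S span_is_submodule] assms by simp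
  then show ?thesis unfolding sub_dim_eq_dim_vs using W.gen_ge_dim[of S] assms S by simp
qed

lemma span_basis_exists:
  assumes "finite S" "S \<subseteq> carrier_vec n"
  obtains B where "finite B" "B \<subseteq> span S" "lin_indpt B" "span B = span S"
    "card B = sub_dim n (span S)"
proof -
  interpret W: vectorspace class_ring "vs (span S)"
    using span_is_subspace subspace_is_vs assms by simp
  have "W.fin_dim" using fin_dim_span assms by simp
  then obtain B where B: "finite B" "W.basis B" using W.finite_basis_exists by blast
  have Bs: "B \<subseteq> span S" using B unfolding W.basis_def by simp
  note not_depend = span_li_not_depend[OF Bs span_is_submodule[OF assms(2)]]
  have "lin_indpt B" "span B = span S"
    using B not_depend unfolding W.basis_def by simp_all
  moreover have "card B = sub_dim n (span S)" unfolding sub_dim_eq_dim_vs using W.dim_basis B by simp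
  ultimately show ?thesis using that B Bs by blast
qed

lemma card_le_sub_dim_span:
  assumes "finite S" "S \<subseteq> carrier_vec n" "B \<subseteq> span S" "lin_indpt B"
  shows "card B \<le> sub_dim n (span S)"
proof -
  interpret W: vectorspace class_ring "vs (span S)"
    using span_is_subspace subspace_is_vs assms by simp
  have "W.fin_dim" using fin_dim_span assms by simp
  moreover have "W.lin_indpt B"
    using span_li_not_depend(2)[OF assms(3) span_is_submodule[OF assms(2)]] assms(4) by simp
  ultimately show ?thesis
    unfolding sub_dim_eq_dim_vs using W.li_le_dim(2) assms(3) by auto
qed

lemma sub_dim_span_mono:
  assumes "finite S" "S \<subseteq> carrier_vec n" "finite T" "T \<subseteq> carrier_vec n" "S \<subseteq> span T"
  shows "sub_dim n (span S) \<le> sub_dim n (span T)"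
proof -
  obtain B where B: "B \<subseteq> span S" "lin_indpt B" "card B = sub_dim n (span S)"
    using span_basis_exists[OF assms(1,2)] by metis
  have "span S \<subseteq> span T" using span_is_subset[OF assms(5) span_is_submodule[OF assms(4)]] .
  then show ?thesis using card_le_sub_dim_span[OF assms(3,4) _ B(2)] B by auto
qed

lemma sub_dim_span_Un_le:
  assumes "finite S" "S \<subseteq> carrier_vec n" "finite T" "T \<subseteq> carrier_vec n"
  shows "sub_dim n (span (S \<union> T)) \<le> sub_dim n (span S) + sub_dim n (span T)"
proof -
  obtain BS where BS: "finite BS" "BS \<subseteq> span S" "span BS = span S" "card BS = sub_dim n (span S)"
    using span_basis_exists[OF assms(1,2)] by metis
  obtain BT where BT: "finite BT" "BT \<subseteq> span T" "span BT = span T" "card BT = sub_dim n (span T)"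
    using span_basis_exists[OF assms(3,4)] by metis
  have B: "BS \<union> BT \<subseteq> carrier_vec n"
    using BS(2) BT(2) span_closed[OF assms(2)] span_closed[OF assms(4)] by auto
  have "S \<subseteq> span (BS \<union> BT)" "T \<subseteq> span (BS \<union> BT)"
    using in_own_span[OF assms(2)] in_own_span[OF assms(4)] BS(3) BT(3)
      span_is_monotone[of BS "BS \<union> BT"] span_is_monotone[of BT "BS \<union> BT"] by auto
  then have "sub_dim n (span (S \<union> T)) \<le> sub_dim n (span (BS \<union> BT))"
    using sub_dim_span_mono[of "S \<union> T" "BS \<union> BT"] assms BS(1) BT(1) B by simp
  also have "\<dots> \<le> card (BS \<union> BT)" using sub_dim_span_le_card BS(1) BT(1) B by simp
  also have "\<dots> \<le> card BS + card BT" by (rule card_Un_le)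
  finally show ?thesis using BS(4) BT(4) by simp
qed

lemma span_coordinate_zero:
  assumes "T \<subseteq> carrier_vec n" "\<forall>t\<in>T. t $ i = 0" "i < n" "x \<in> span T"
  shows "x $ i = 0"
proof -
  from assms(4) obtain a A where A: "x = lincomb a A" "finite A" "A \<subseteq> T"
    unfolding span_def by blast
  have "x $ i = (\<Sum>y\<in>A. a y * y $ i)" using A lincomb_index[OF assms(3)] assms(1) by auto
  also have "\<dots> = 0" using A assms(2) by (intro sum.neutral) auto
  finally show ?thesis .
qed

lemma inj_on_row_pivot:
  fixes G :: "'a mat"
  assumes G: "G \<in> carrier_mat m n" and p: "\<forall>j<m. p j < n"
    and piv: "\<forall>i<m. \<forall>j<m. G $$ (i, p j) = (if i = j then 1 else 0)"
  shows "inj_on (row G) {..<m}"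
proof (rule inj_onI)
  fix i j assume ij: "i \<in> {..<m}" "j \<in> {..<m}" and "row G i = row G j"
  then have "row G i $ p i = row G j $ p i" by simp
  then show "i = j" using ij G p piv by (cases "i = j") auto
qed

lemma pivot_rows_disjoint:
  fixes G :: "'a mat"
  assumes G: "G \<in> carrier_mat m n" and p: "\<forall>j<m. p j < n"
    and piv: "\<forall>i<m. \<forall>j<m. G $$ (i, p j) = (if i = j then 1 else 0)"
    and B: "\<forall>x\<in>B. \<forall>j<m. x $ p j = 0"
  shows "set (rows G) \<inter> B = {}"
proof (rule ccontr)
  assume "set (rows G) \<inter> B \<noteq> {}"
  then obtain i where "i < m" "row G i \<in> B" using G by (auto simp: rows_def)
  moreover have "row G i $ p i = 1" using \<open>i < m\<close> G p piv by auto
  ultimately show False using B by fastforce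
qed

lemma lincomb_pivot_rows_Un_zero:
  assumes G: "G \<in> carrier_mat m n" and p: "\<forall>j<m. p j < n"
    and piv: "\<forall>i<m. \<forall>j<m. G $$ (i, p j) = (if i = j then 1 else 0)"
    and B: "finite B" "B \<subseteq> carrier_vec n" "\<forall>x\<in>B. \<forall>j<m. x $ p j = 0"
    and zero: "lincomb a (set (rows G) \<union> B) = 0\<^sub>v n"
  shows "\<forall>x\<in>set (rows G). a x = 0" "lincomb a B = 0\<^sub>v n"
proof -
  have R: "set (rows G) = row G ` {..<m}" using G by (auto simp: rows_def)
  have Rc: "set (rows G) \<subseteq> carrier_vec n" using G R by auto
  have split: "0 = (\<Sum>x\<in>set (rows G). a x * x $ i) + (\<Sum>x\<in>B. a x * x $ i)" if "i < n" for i
  proof -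
    have "0 = lincomb a (set (rows G) \<union> B) $ i" using zero that by simp
    also have "\<dots> = (\<Sum>x\<in>set (rows G) \<union> B. a x * x $ i)"
      using lincomb_index[OF that] Rc B(2) by simp
    also have "\<dots> = (\<Sum>x\<in>set (rows G). a x * x $ i) + (\<Sum>x\<in>B. a x * x $ i)"
      by (rule sum.union_disjoint[OF _ B(1) pivot_rows_disjoint[OF G p piv B(3)]]) simp
    finally show ?thesis .
  qed
  have "a (row G j) = 0" if j: "j < m" for j
  proof -
    have "0 = (\<Sum>x\<in>set (rows G). a x * x $ p j)" using split[of "p j"] p j B(3) by simp
    also have "\<dots> = (\<Sum>i<m. a (row G i) * row G i $ p j)"
      unfolding R using sum.reindex[OF inj_on_row_pivot[OF G p piv]] by simp
    also have "\<dots> = (\<Sum>i<m. if i = j then a (row G j) else 0)"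
      using G p piv j by (intro sum.cong) auto
    also have "\<dots> = a (row G j)" using j by simp
    finally show ?thesis by simp
  qed
  then show aR: "\<forall>x\<in>set (rows G). a x = 0" using R by auto
  show "lincomb a B = 0\<^sub>v n"
  proof (rule eq_vecI)
    fix i assume "i < dim_vec (0\<^sub>v n)"
    then show "lincomb a B $ i = 0\<^sub>v n $ i" using split[of i] aR lincomb_index[of i B a] B(2) by simp
  qed (use lincomb_closed[OF B(2)] in simp)
qed

lemma lin_indpt_pivot_rows_Un:
  assumes G: "G \<in> carrier_mat m n" and p: "\<forall>j<m. p j < n"
    and piv: "\<forall>i<m. \<forall>j<m. G $$ (i, p j) = (if i = j then 1 else 0)"
    and B: "finite B" "B \<subseteq> carrier_vec n" "lin_indpt B" "\<forall>x\<in>B. \<forall>j<m. x $ p j = 0"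
  shows "lin_indpt (set (rows G) \<union> B)"
proof
  assume "lin_dep (set (rows G) \<union> B)"
  moreover have "set (rows G) \<union> B \<subseteq> carrier_vec n" using G B(2) by (auto simp: rows_def)
  ultimately obtain a v where av: "lincomb a (set (rows G) \<union> B) = 0\<^sub>v n"
    "v \<in> set (rows G) \<union> B" "a v \<noteq> 0"
    using finite_lin_dep[of "set (rows G) \<union> B"] B(1) by force
  note zero = lincomb_pivot_rows_Un_zero[OF G p piv B(1,2,4) av(1)]
  have "v \<in> B" using av zero(1) by auto
  then have "lin_dep B" using lin_dep_crit[OF B(1) subset_refl _ _ _ zero(2), of v] av(3) by auto
  then show False using B(3) by simp
qed

lemma sub_dim_span_pivot_rows_Un:
  assumes G: "G \<in> carrier_mat m n" and p: "\<forall>j<m. p j < n"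
    and piv: "\<forall>i<m. \<forall>j<m. G $$ (i, p j) = (if i = j then 1 else 0)"
    and T: "finite T" "T \<subseteq> carrier_vec n" "\<forall>t\<in>T. \<forall>j<m. t $ p j = 0"
  shows "m + sub_dim n (span T) \<le> sub_dim n (span (set (rows G) \<union> T))"
proof -
  let ?R = "set (rows G)"
  have Rc: "?R \<subseteq> carrier_vec n" using G by (auto simp: rows_def)
  obtain B where B: "finite B" "B \<subseteq> span T" "lin_indpt B" "card B = sub_dim n (span T)"
    using span_basis_exists[OF T(1,2)] by metis
  have Bc: "B \<subseteq> carrier_vec n" using B(2) span_closed[OF T(2)] by auto
  have Bz: "\<forall>x\<in>B. \<forall>j<m. x $ p j = 0"
  proof (intro ballI allI impI)
    fix x j assume x: "x \<in> B" and j: "j < m"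
    then have "\<forall>t\<in>T. t $ p j = 0" using T(3) by blast
    then show "x $ p j = 0"
      by (rule span_coordinate_zero[OF T(2)]) (use p j x B(2) in auto)
  qed
  have R: "?R = row G ` {..<m}" using G by (auto simp: rows_def)
  have RB: "lin_indpt (?R \<union> B)" "?R \<inter> B = {}" "card ?R = m"
    using lin_indpt_pivot_rows_Un[OF G p piv B(1) Bc B(3) Bz] pivot_rows_disjoint[OF G p piv Bz]
      card_image[OF inj_on_row_pivot[OF G p piv]] R by simp_all
  have "?R \<union> B \<subseteq> span (?R \<union> T)"
    using in_own_span[of "?R \<union> T"] span_is_monotone[of T "?R \<union> T"] Rc T(2) B(2) by auto
  then have "card (?R \<union> B) \<le> sub_dim n (span (?R \<union> T))"
    using card_le_sub_dim_span[OF _ _ _ RB(1)] Rc T by simp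
  moreover have "card (?R \<union> B) = m + sub_dim n (span T)"
    using card_Un_disjoint[OF _ B(1) RB(2)] RB(3) B(4) by simp
  ultimately show ?thesis by simp
qed

end

abbreviation vspan :: "nat \<Rightarrow> 'a::field vec set \<Rightarrow> 'a vec set" where
  "vspan N S \<equiv> LinearCombinations.module.span class_ring (module_vec TYPE('a) N) S"

lemma mrank_eq_sub_dim_cols:
  "A \<in> carrier_mat m N \<Longrightarrow> mrank A = sub_dim m (vspan m (set (cols A)))"
  by (simp add: mrank_def vec_space.rank_def sub_dim_def)

lemma row_sp_eq_vspan_rows: "row_sp G = vspan (dim_col G) (set (rows G))"
  by (simp add: row_sp_def vec_space.row_space_def)

lemma rows_subset_carrier: "A \<in> carrier_mat m N \<Longrightarrow> set (rows A) \<subseteq> carrier_vec N"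
  by (auto simp: rows_def)

lemma row_mem_rows: "i < dim_row A \<Longrightarrow> row A i \<in> set (rows A)"
  by (simp add: rows_def)

lemma col_mem_cols: "j < dim_col A \<Longrightarrow> col A j \<in> set (cols A)"
  by (simp add: cols_def)

lemma cols_subset_carrier: "A \<in> carrier_mat m N \<Longrightarrow> set (cols A) \<subseteq> carrier_vec m"
  by (auto simp: cols_def)

lemma rows_diff_subset_span:
  fixes G1 G2 :: "'a::field mat"
  assumes G1: "G1 \<in> carrier_mat m n" and G2: "G2 \<in> carrier_mat m n"
  shows "set (rows (G2 - G1)) \<subseteq> vspan n (set (rows G1) \<union> set (rows G2))"
proof
  interpret V: vec_space "TYPE('a)" n .
  have c: "set (rows G1) \<union> set (rows G2) \<subseteq> carrier_vec n"
    using rows_subset_carrier[OF G1] rows_subset_carrier[OF G2] by simp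
  fix w assume "w \<in> set (rows (G2 - G1))"
  then obtain i where i: "i < m" "w = row (G2 - G1) i" using G1 by (auto simp: rows_def)
  have "w = row G2 i - row G1 i" unfolding i(2) by (rule eq_vecI) (use i G1 G2 in auto)
  moreover have "row G2 i \<in> vspan n (set (rows G1) \<union> set (rows G2))"
    "row G1 i \<in> vspan n (set (rows G1) \<union> set (rows G2))"
    using row_mem_rows[of i G1] row_mem_rows[of i G2] i G1 G2 subsetD[OF V.in_own_span[OF c]]
    by simp_all
  ultimately show "w \<in> vspan n (set (rows G1) \<union> set (rows G2))"
    using V.span_minus[OF c] by simp
qed

lemma rows_subset_span_diff:
  fixes G1 G2 :: "'a::field mat"
  assumes G1: "G1 \<in> carrier_mat m n" and G2: "G2 \<in> carrier_mat m n"
  shows "set (rows G2) \<subseteq> vspan n (set (rows G1) \<union> set (rows (G2 - G1)))"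
proof
  interpret V: vec_space "TYPE('a)" n .
  have H: "G2 - G1 \<in> carrier_mat m n" using G1 by (rule minus_carrier_mat)
  have c: "set (rows G1) \<union> set (rows (G2 - G1)) \<subseteq> carrier_vec n"
    using rows_subset_carrier[OF G1] rows_subset_carrier[OF H] by simp
  fix w assume "w \<in> set (rows G2)"
  then obtain i where i: "i < m" "w = row G2 i" using G2 by (auto simp: rows_def)
  have "w = row G1 i + row (G2 - G1) i" unfolding i(2) by (rule eq_vecI) (use i G1 G2 in auto)
  moreover have "row G1 i \<in> vspan n (set (rows G1) \<union> set (rows (G2 - G1)))"
    "row (G2 - G1) i \<in> vspan n (set (rows G1) \<union> set (rows (G2 - G1)))"
    using row_mem_rows[of i G1] row_mem_rows[of i "G2 - G1"] i G1 H subsetD[OF V.in_own_span[OF c]]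
    by simp_all
  ultimately show "w \<in> vspan n (set (rows G1) \<union> set (rows (G2 - G1)))"
    using V.span_add1[OF c] by simp
qed

lemma sub_dim_rows_le_dim_row:
  assumes "A \<in> carrier_mat m N"
  shows "sub_dim N (vspan N (set (rows A))) \<le> m"
proof -
  have "sub_dim N (vspan N (set (rows A))) \<le> card (set (rows A))"
    using vec_space.sub_dim_span_le_card[OF _ rows_subset_carrier[OF assms]] by simp
  also have "\<dots> \<le> m" using card_length[of "rows A"] assms by simp
  finally show ?thesis .
qed

lemma column_rank_factorization:
  fixes A :: "'a::field mat"
  assumes A: "A \<in> carrier_mat m N"
  obtains P Y where "P \<in> carrier_mat m (mrank A)" "Y \<in> carrier_mat (mrank A) N" "A = P * Y"
proof -
  interpret Vm: vec_space "TYPE('a)" m .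
  have fc: "finite (set (cols A))" "set (cols A) \<subseteq> carrier_vec m"
    using cols_subset_carrier[OF A] by auto
  obtain B where B: "finite B" "B \<subseteq> vspan m (set (cols A))"
    "vspan m B = vspan m (set (cols A))" "card B = mrank A"
    using Vm.span_basis_exists[OF fc] mrank_eq_sub_dim_cols[OF A] by metis
  have Bc: "B \<subseteq> carrier_vec m" using B(2) Vm.span_closed[OF fc(2)] by auto
  obtain bs where bs: "set bs = B" "distinct bs" using finite_distinct_list[OF B(1)] by blast
  define P where "P = mat_of_cols m bs"
  have P: "P \<in> carrier_mat m (mrank A)"
    unfolding P_def using bs B(4) distinct_card by fastforce
  have "\<exists>x \<in> carrier_vec (mrank A). P *\<^sub>v x = col A j" if j: "j < N" for j
  proof -
    have "col A j \<in> vspan m (set (cols A))"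
      using Vm.in_own_span[OF fc(2)] j A by (auto simp: cols_def)
    then have "col A j \<in> vec_space.col_space m P"
      unfolding vec_space.col_space_def P_def using bs Bc B(3) by simp
    then show ?thesis using vec_space.col_space_eq[OF P] P by auto
  qed
  then obtain x where x: "\<And>j. j < N \<Longrightarrow> x j \<in> carrier_vec (mrank A) \<and> P *\<^sub>v x j = col A j"
    by metis
  define Y where "Y = mat (mrank A) N (\<lambda>(k,j). x j $ k)"
  have Y: "Y \<in> carrier_mat (mrank A) N" unfolding Y_def by simp
  have "A = P * Y"
  proof (rule eq_matI)
    fix i j assume ij: "i < dim_row (P * Y)" "j < dim_col (P * Y)"
    have "col Y j = x j" by (rule eq_vecI) (use ij x[of j] Y in \<open>auto simp: Y_def\<close>)
    moreover have "(P *\<^sub>v x j) $ i = A $$ (i, j)" using ij x[of j] A P Y by auto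
    ultimately show "A $$ (i, j) = (P * Y) $$ (i, j)" using ij P Y by auto
  qed (use A P Y in auto)
  then show ?thesis using that P Y by blast
qed

lemma sub_dim_rows_le_mrank:
  fixes A :: "'a::field mat"
  assumes A: "A \<in> carrier_mat m N"
  shows "sub_dim N (vspan N (set (rows A))) \<le> mrank A"
proof -
  obtain P Y where P: "P \<in> carrier_mat m (mrank A)" and Y: "Y \<in> carrier_mat (mrank A) N"
    and PY: "A = P * Y"
    using column_rank_factorization[OF A] .
  have "set (rows A) \<subseteq> vspan N (set (rows Y))"
  proof
    fix w assume "w \<in> set (rows A)"
    then obtain i where i: "i < m" "w = row A i" using A by (auto simp: rows_def)
    have "w = Y\<^sup>T *\<^sub>v row P i"
      by (rule eq_vecI) (use i P Y PY comm_scalar_prod[of "row P i" "mrank A"] in auto)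
    then have "w \<in> vec_space.row_space N Y"
      using vec_space.row_space_eq[OF Y] Y P i by auto
    then show "w \<in> vspan N (set (rows Y))" unfolding vec_space.row_space_def .
  qed
  then have "sub_dim N (vspan N (set (rows A))) \<le> sub_dim N (vspan N (set (rows Y)))"
    using vec_space.sub_dim_span_mono[OF _ rows_subset_carrier[OF A] _ rows_subset_carrier[OF Y]] by simp
  also have "\<dots> \<le> mrank A" using sub_dim_rows_le_dim_row[OF Y] .
  finally show ?thesis .
qed

lemma mrank_transpose:
  fixes A :: "'a::field mat"
  assumes A: "A \<in> carrier_mat m N"
  shows "mrank (A\<^sup>T) = mrank A"
  using sub_dim_rows_le_mrank[OF A] sub_dim_rows_le_mrank[of "A\<^sup>T" N m]
    mrank_eq_sub_dim_cols[OF A] mrank_eq_sub_dim_cols[of "A\<^sup>T" N m] A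
  by simp

lemma sub_dim_rows_eq_mrank:
  assumes "A \<in> carrier_mat m N"
  shows "sub_dim N (vspan N (set (rows A))) = mrank A"
proof -
  have "mrank (A\<^sup>T) = sub_dim N (vspan N (set (rows A)))"
    using mrank_eq_sub_dim_cols[of "A\<^sup>T" N m] assms by (simp add: cols_transpose)
  then show ?thesis using mrank_transpose[OF assms] by simp
qed

lemma mrank_le_if_cols_in_span:
  fixes A :: "'a::field mat"
  assumes A: "A \<in> carrier_mat m N" and B: "B \<in> carrier_mat m N'"
    and "set (cols B) \<subseteq> vspan m (set (cols A))"
  shows "mrank B \<le> mrank A"
  using vec_space.sub_dim_span_mono[OF _ cols_subset_carrier[OF B] _ cols_subset_carrier[OF A]]
    assms(3) mrank_eq_sub_dim_cols[OF A] mrank_eq_sub_dim_cols[OF B] by simp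

lemma mrank_le_if_rows_in_span:
  fixes A :: "'a::field mat"
  assumes A: "A \<in> carrier_mat m N" and B: "B \<in> carrier_mat m' N"
    and "set (rows B) \<subseteq> vspan N (set (rows A))"
  shows "mrank B \<le> mrank A"
  using vec_space.sub_dim_span_mono[OF _ rows_subset_carrier[OF B] _ rows_subset_carrier[OF A]]
    assms(3) sub_dim_rows_eq_mrank[OF A] sub_dim_rows_eq_mrank[OF B] by simp

lemma mrank_submatrix_le:
  fixes H :: "'a::field mat"
  assumes H: "H \<in> carrier_mat m N" and "i0 + m' \<le> m" "j0 + N' \<le> N"
  shows "mrank (mat m' N' (\<lambda>(i,j). H $$ (i + i0, j + j0))) \<le> mrank H"
proof -
  interpret VN: vec_space "TYPE('a)" N .
  interpret Vm: vec_space "TYPE('a)" m' .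
  define H1 where "H1 = mat m' N (\<lambda>(i,j). H $$ (i + i0, j))"
  have H1: "H1 \<in> carrier_mat m' N" unfolding H1_def by simp
  have "set (rows H1) \<subseteq> set (rows H)"
  proof
    fix w assume "w \<in> set (rows H1)"
    then obtain i where i: "i < m'" "w = row H1 i" using H1 by (auto simp: rows_def)
    have "w = row H (i + i0)" unfolding i(2) H1_def by (rule eq_vecI) (use i assms in auto)
    then show "w \<in> set (rows H)" using i assms by (auto simp: rows_def)
  qed
  then have "mrank H1 \<le> mrank H"
    using mrank_le_if_rows_in_span[OF H H1] VN.in_own_span[OF rows_subset_carrier[OF H]] by blast
  moreover have "set (cols (mat m' N' (\<lambda>(i,j). H $$ (i + i0, j + j0)))) \<subseteq> set (cols H1)"
  proof
    fix w assume "w \<in> set (cols (mat m' N' (\<lambda>(i,j). H $$ (i + i0, j + j0))))"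
    then obtain j where j: "j < N'" "w = col (mat m' N' (\<lambda>(i,j). H $$ (i + i0, j + j0))) j"
      by (auto simp: cols_def)
    have "w = col H1 (j + j0)" unfolding j(2) H1_def by (rule eq_vecI) (use j assms in auto)
    then show "w \<in> set (cols H1)" using j assms H1 by (auto simp: cols_def)
  qed
  then have "mrank (mat m' N' (\<lambda>(i,j). H $$ (i + i0, j + j0))) \<le> mrank H1"
    using mrank_le_if_cols_in_span[OF H1, of _ N'] Vm.in_own_span[OF cols_subset_carrier[OF H1]]
    by auto
  ultimately show ?thesis by simp
qed

text \<open>The generator matrix of E^k_{C,D} written entrywise, with a = r - kd and b = kd:
  its first a rows are (I_a | C | 0 | D') and its last b rows are (0 | 0 | I_b | D'').
  For b = 0 it is (I_r | D), the generator matrix of the lifting I(D).\<close>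

definition Ek_matrix :: "nat \<Rightarrow> nat \<Rightarrow> 'a mat \<Rightarrow> 'a mat \<Rightarrow> 'a::field mat" where
  "Ek_matrix a b C D = mat (a + b) (a + b + b + dim_col D) (\<lambda>(i, j).
    if i < a then
      (if j < a then (if i = j then 1 else 0) else if j < a + b then C $$ (i, j - a)
       else if j < a + b + b then 0 else D $$ (i, j - (a + b + b)))
    else
      (if j < a + b then 0 else if j < a + b + b then (if i + b = j then 1 else 0)
       else D $$ (i, j - (a + b + b))))"

lemma Ek_matrix_carrier:
  "D \<in> carrier_mat m N \<Longrightarrow> Ek_matrix a b C D \<in> carrier_mat (a + b) (a + b + b + N)"
  by (simp add: Ek_matrix_def)

lemma Ek_matrix_pivot:
  "i < a + b \<Longrightarrow> j < a + b \<Longrightarrow>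
    Ek_matrix a b C D $$ (i, if j < a then j else j + b) = (if i = j then 1 else 0)"
  by (auto simp: Ek_matrix_def)

lemma lift_eq_row_sp_Ek_matrix:
  assumes "C \<in> carrier_mat r N"
  shows "lift C = row_sp (Ek_matrix r 0 Z C)"
proof -
  have "hcat (1\<^sub>m (dim_row C)) C = Ek_matrix r 0 Z C"
    by (rule eq_matI) (use assms in \<open>auto simp: hcat_def Ek_matrix_def\<close>)
  then show ?thesis unfolding lift_def by simp
qed

lemma Ek_space_eq_row_sp_Ek_matrix:
  assumes C: "C \<in> carrier_mat a b" and D: "D \<in> carrier_mat (a + b) N"
  shows "Ek_space a b C D = row_sp (Ek_matrix a b C D)"
proof -
  let ?T = "hcat (hcat (hcat (1\<^sub>m a) C) (0\<^sub>m a b)) (top_rows a D)"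
  let ?B = "hcat (hcat (hcat (0\<^sub>m b a) (0\<^sub>m b b)) (1\<^sub>m b)) (bottom_rows b D)"
  have "?T @\<^sub>r ?B = Ek_matrix a b C D"
    by (rule eq_matI)
      (use C D in \<open>auto simp: append_rows_def hcat_def top_rows_def bottom_rows_def Ek_matrix_def\<close>)
  then show ?thesis unfolding Ek_space_def by simp
qed

lemma sub_dim_row_sp_Ek_matrix:
  assumes "D \<in> carrier_mat (a + b) N" "n = a + b + b + N"
  shows "sub_dim n (row_sp (Ek_matrix a b C D)) = a + b"
proof -
  interpret V: vec_space "TYPE('a)" n .
  let ?G = "Ek_matrix a b C D"
  have G: "?G \<in> carrier_mat (a + b) n" using Ek_matrix_carrier[OF assms(1)] assms(2) by simp
  let ?p = "\<lambda>j. if j < a then j else j + b"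
  have "\<forall>j<a + b. ?p j < n" using assms(2) by auto
  moreover have "\<forall>i<a + b. \<forall>j<a + b. ?G $$ (i, ?p j) = (if i = j then 1 else 0)"
    using Ek_matrix_pivot by blast
  ultimately have "a + b + sub_dim n (V.span {}) \<le> sub_dim n (V.span (set (rows ?G) \<union> {}))"
    using V.sub_dim_span_pivot_rows_Un[OF G, of ?p "{}"] by simp
  then show ?thesis
    using sub_dim_rows_le_dim_row[OF G] G by (simp add: row_sp_eq_vspan_rows)
qed

lemma sub_dim_rows_Un_ge_pivot:
  fixes G1 G2 H :: "'a::field mat"
  assumes G1: "G1 \<in> carrier_mat r n" and G2: "G2 \<in> carrier_mat r n" and H: "H \<in> carrier_mat m n"
    and p: "\<forall>j<r. p j < n"
    and piv: "\<forall>i<r. \<forall>j<r. G1 $$ (i, p j) = (if i = j then 1 else 0)"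
    and H_zero: "\<forall>i<m. \<forall>j<r. H $$ (i, p j) = 0"
    and H_rows: "set (rows H) \<subseteq> vspan n (set (rows G1) \<union> set (rows G2))"
  shows "r + sub_dim n (vspan n (set (rows H)))
           \<le> sub_dim n (vspan n (set (rows G1) \<union> set (rows G2)))"
proof -
  interpret V: vec_space "TYPE('a)" n .
  note c = rows_subset_carrier[OF G1] rows_subset_carrier[OF G2] rows_subset_carrier[OF H]
  have "\<forall>t\<in>set (rows H). \<forall>j<r. t $ p j = 0" using H_zero H p by (auto simp: rows_def)
  then have "r + sub_dim n (vspan n (set (rows H)))
      \<le> sub_dim n (vspan n (set (rows G1) \<union> set (rows H)))"
    using V.sub_dim_span_pivot_rows_Un[OF G1 p piv _ c(3)] by simp
  also have "\<dots> \<le> sub_dim n (vspan n (set (rows G1) \<union> set (rows G2)))"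
    using V.sub_dim_span_mono[of "set (rows G1) \<union> set (rows H)"] H_rows
      V.in_own_span[of "set (rows G1) \<union> set (rows G2)"] c by auto
  finally show ?thesis .
qed

lemma sub_dim_rows_Ek_matrix_same_shape:
  fixes C C' D D' :: "'a::field mat"
  assumes C: "C \<in> carrier_mat a b" "C' \<in> carrier_mat a b"
    and D: "D \<in> carrier_mat (a + b) N" "D' \<in> carrier_mat (a + b) N"
    and n: "n = a + b + b + N"
  shows "a + b + max (mrank (C' - C)) (mrank (D' - D))
    \<le> sub_dim n (vspan n (set (rows (Ek_matrix a b C D)) \<union> set (rows (Ek_matrix a b C' D'))))"
proof -
  interpret V: vec_space "TYPE('a)" n .
  let ?G1 = "Ek_matrix a b C D" and ?G2 = "Ek_matrix a b C' D'"
  let ?H = "?G2 - ?G1" and ?p = "\<lambda>j. if j < a then j else j + b"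
  have G1: "?G1 \<in> carrier_mat (a + b) n" and G2: "?G2 \<in> carrier_mat (a + b) n"
    using Ek_matrix_carrier[OF D(1)] Ek_matrix_carrier[OF D(2)] n by simp_all
  then have H: "?H \<in> carrier_mat (a + b) n" by (intro minus_carrier_mat)
  have p: "\<forall>j<a + b. ?p j < n" using n by auto
  have piv: "\<forall>i<a + b. \<forall>j<a + b. ?G1 $$ (i, ?p j) = (if i = j then 1 else 0)"
    using Ek_matrix_pivot by blast
  have H_zero: "\<forall>i<a + b. \<forall>j<a + b. ?H $$ (i, ?p j) = 0"
    using Ek_matrix_pivot[of _ a b _ C' D'] Ek_matrix_pivot[of _ a b _ C D] p G1 G2 by auto
  have "a + b + mrank ?H \<le> sub_dim n (vspan n (set (rows ?G1) \<union> set (rows ?G2)))"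
    using sub_dim_rows_Un_ge_pivot[OF G1 G2 H p piv H_zero rows_diff_subset_span[OF G1 G2]]
      sub_dim_rows_eq_mrank[OF H]
    by simp
  moreover have "C' - C = mat a b (\<lambda>(i,j). ?H $$ (i + 0, j + a))"
    by (rule eq_matI) (use C D n in \<open>auto simp: Ek_matrix_def\<close>)
  then have "mrank (C' - C) \<le> mrank ?H" using mrank_submatrix_le[OF H, of 0 a a b] n by simp
  moreover have "D' - D = mat (a + b) N (\<lambda>(i,j). ?H $$ (i + 0, j + (a + b + b)))"
    by (rule eq_matI) (use C D n in \<open>auto simp: Ek_matrix_def\<close>)
  then have "mrank (D' - D) \<le> mrank ?H" using mrank_submatrix_le[OF H, of 0 "a + b" "a + b + b" N] n by simp
  ultimately show ?thesis by simp
qed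

text \<open>For b1 < b2 the last b2 - b1 rows of the E^k-generator of level b2 vanish on the pivot columns
  of the one of level b1 and have their own identity block.\<close>

lemma sub_dim_rows_Ek_matrix_different_shape:
  fixes C C' D D' :: "'a::field mat"
  assumes C: "C \<in> carrier_mat a1 b1" "C' \<in> carrier_mat a2 b2"
    and D: "D \<in> carrier_mat r N1" "D' \<in> carrier_mat r N2"
    and r: "a1 + b1 = r" "a2 + b2 = r" and b: "b1 < b2"
    and n: "n = a1 + b1 + b1 + N1" "n = a2 + b2 + b2 + N2"
  shows "r + (b2 - b1)
    \<le> sub_dim n (vspan n (set (rows (Ek_matrix a1 b1 C D)) \<union> set (rows (Ek_matrix a2 b2 C' D'))))"
proof -
  interpret V: vec_space "TYPE('a)" n .
  let ?G1 = "Ek_matrix a1 b1 C D" and ?G2 = "Ek_matrix a2 b2 C' D'"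
  have G1: "?G1 \<in> carrier_mat r n" and G2: "?G2 \<in> carrier_mat r n"
    using Ek_matrix_carrier[OF D(1), of a1 b1 C] Ek_matrix_carrier[OF D(2), of a2 b2 C'] n r
    by (simp_all only:)
  define H where "H = mat (b2 - b1) n (\<lambda>(i,j). ?G2 $$ (i + a2 + b1, j))"
  have H: "H \<in> carrier_mat (b2 - b1) n" unfolding H_def by simp
  have H_rows: "set (rows H) \<subseteq> vspan n (set (rows ?G1) \<union> set (rows ?G2))"
  proof
    fix w assume "w \<in> set (rows H)"
    then obtain i where i: "i < b2 - b1" "w = row H i" using H by (auto simp: rows_def)
    have "w = row ?G2 (i + a2 + b1)" unfolding i(2) H_def by (rule eq_vecI) (use i G2 r b in auto)
    then have "w \<in> set (rows ?G1) \<union> set (rows ?G2)" using i r b G2 by (auto simp: rows_def)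
    moreover have "set (rows ?G1) \<union> set (rows ?G2) \<subseteq> carrier_vec n"
      using rows_subset_carrier[OF G1] rows_subset_carrier[OF G2] by simp
    ultimately show "w \<in> vspan n (set (rows ?G1) \<union> set (rows ?G2))"
      using V.in_own_span by blast
  qed
  let ?p = "\<lambda>j. if j < a1 then j else j + b1"
  have p: "\<forall>j<r. ?p j < n" using n r by auto
  have piv: "\<forall>i<r. \<forall>j<r. ?G1 $$ (i, ?p j) = (if i = j then 1 else 0)"
    using Ek_matrix_pivot[of _ a1 b1 _ C D] r by auto
  have H_zero: "\<forall>i<b2 - b1. \<forall>j<r. H $$ (i, ?p j) = 0"
    using r n b unfolding H_def by (auto simp: Ek_matrix_def)
  have "r + sub_dim n (vspan n (set (rows H)))
      \<le> sub_dim n (vspan n (set (rows ?G1) \<union> set (rows ?G2)))"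
    using sub_dim_rows_Un_ge_pivot[OF G1 G2 H p piv H_zero H_rows] .
  moreover have "\<forall>j<b2 - b1. j + r + b1 < n" using n r b by auto
  moreover have "\<forall>i<b2 - b1. \<forall>j<b2 - b1. H $$ (i, j + r + b1) = (if i = j then 1 else 0)"
    using r n b unfolding H_def by (auto simp: Ek_matrix_def)
  ultimately have "r + (b2 - b1 + sub_dim n (V.span {}))
      \<le> sub_dim n (vspan n (set (rows ?G1) \<union> set (rows ?G2)))"
    using V.sub_dim_span_pivot_rows_Un[OF H, of "\<lambda>j. j + r + b1" "{}"] by simp
  then show ?thesis by simp
qed

lemma mrank_diff_Ek_matrix_lift_le:
  fixes D D' :: "'a::field mat"
  assumes D: "D \<in> carrier_mat r N" "D' \<in> carrier_mat r N"
  shows "mrank (Ek_matrix r 0 Z D' - Ek_matrix r 0 Z D) \<le> mrank (D' - D)"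
proof (rule mrank_le_if_cols_in_span)
  interpret Vr: vec_space "TYPE('a)" r .
  let ?H = "Ek_matrix r 0 Z D' - Ek_matrix r 0 Z D"
  show H: "?H \<in> carrier_mat r (r + N)"
    using Ek_matrix_carrier[OF D(1), of r 0] by (intro minus_carrier_mat) simp
  show DD: "D' - D \<in> carrier_mat r N" using D(1) by (rule minus_carrier_mat)
  show "set (cols ?H) \<subseteq> vspan r (set (cols (D' - D)))"
  proof
    fix w assume "w \<in> set (cols ?H)"
    then obtain j where j: "j < r + N" "w = col ?H j" using H by (auto simp: cols_def)
    show "w \<in> vspan r (set (cols (D' - D)))"
    proof (cases "j < r")
      case True
      then have "w = 0\<^sub>v r" using j D by (auto simp: Ek_matrix_def)
      then show ?thesis
        using vectorspace.span_zero[OF vec_vs[where 'a = 'a and n = r]] by (simp add: module_vec_simps)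
    next
      case False
      then have "w = col (D' - D) (j - r)" and "j - r < N" using j D by (auto simp: Ek_matrix_def)
      then have "w \<in> set (cols (D' - D))" using col_mem_cols[of "j - r" "D' - D"] D by simp
      then show ?thesis by (rule subsetD[OF Vr.in_own_span[OF cols_subset_carrier[OF DD]]])
    qed
  qed
qed

lemma sub_dim_rows_lift_le:
  fixes D D' :: "'a::field mat"
  assumes D: "D \<in> carrier_mat r N" "D' \<in> carrier_mat r N" and n: "n = r + N"
  shows "sub_dim n (vspan n (set (rows (Ek_matrix r 0 Z D)) \<union> set (rows (Ek_matrix r 0 Z D'))))
    \<le> r + mrank (D' - D)"
proof -
  interpret V: vec_space "TYPE('a)" n .
  let ?G1 = "Ek_matrix r 0 Z D" and ?G2 = "Ek_matrix r 0 Z D'"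
  let ?H = "?G2 - ?G1"
  have G1: "?G1 \<in> carrier_mat r n" and G2: "?G2 \<in> carrier_mat r n"
    using Ek_matrix_carrier[OF D(1), of r 0] Ek_matrix_carrier[OF D(2), of r 0] n by simp_all
  then have H: "?H \<in> carrier_mat r n" by (intro minus_carrier_mat)
  note c = rows_subset_carrier[OF G1] rows_subset_carrier[OF G2] rows_subset_carrier[OF H]
  have c13: "set (rows ?G1) \<union> set (rows ?H) \<subseteq> carrier_vec n" using c by simp
  have "set (rows ?G1) \<union> set (rows ?G2) \<subseteq> vspan n (set (rows ?G1) \<union> set (rows ?H))"
    using subset_trans[OF Un_upper1 V.in_own_span[OF c13]] rows_subset_span_diff[OF G1 G2]
    by (rule Un_least)
  then have "sub_dim n (vspan n (set (rows ?G1) \<union> set (rows ?G2)))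
      \<le> sub_dim n (vspan n (set (rows ?G1) \<union> set (rows ?H)))"
    using V.sub_dim_span_mono[OF _ _ _ c13] c by simp
  also have "\<dots> \<le> r + mrank ?H"
    using V.sub_dim_span_Un_le[OF _ c(1) _ c(3)] sub_dim_rows_le_dim_row[OF G1]
      sub_dim_rows_eq_mrank[OF H] by simp
  also have "mrank ?H \<le> mrank (D' - D)" using mrank_diff_Ek_matrix_lift_le[OF D] .
  finally show ?thesis by simp
qed

lemma finite_rank_dists:
  fixes X :: "'a::field mat set"
  assumes "X \<subseteq> carrier_mat m N"
  shows "finite {rank_dist C D | C D. C \<in> X \<and> D \<in> X \<and> C \<noteq> D}"
proof (rule finite_subset)
  show "{rank_dist C D | C D. C \<in> X \<and> D \<in> X \<and> C \<noteq> D} \<subseteq> {..N}"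
  proof
    fix x assume "x \<in> {rank_dist C D | C D. C \<in> X \<and> D \<in> X \<and> C \<noteq> D}"
    then obtain C D where x: "x = rank_dist C D" and "C \<in> X" "D \<in> X" by blast
    then have "D \<in> carrier_mat m N" using assms by blast
    then have "mrank (C - D) \<le> N"
      using vec_space.rank_le_nc[OF minus_carrier_mat[of D m N C]] by (simp add: mrank_def)
    then show "x \<in> {..N}" using x by (simp add: rank_dist_def)
  qed
qed simp

lemma is_MRD_rank_dist_ge:
  assumes X: "is_MRD m N d X" and "C \<in> X" "C' \<in> X" "C \<noteq> C'"
  shows "d \<le> mrank (C - C')"
proof -
  have "finite {rank_dist C D | C D. C \<in> X \<and> D \<in> X \<and> C \<noteq> D}"
    using finite_rank_dists X unfolding is_MRD_def by blast
  then show ?thesis using X assms(2-4)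
    unfolding is_MRD_def min_rank_dist_def rank_dist_def by (auto intro: Min_le)
qed

lemma is_MRD_rank_dist_attained:
  assumes X: "is_MRD m N d X" and "C \<in> X" "C' \<in> X" "C \<noteq> C'"
  obtains A B where "A \<in> X" "B \<in> X" "A \<noteq> B" "mrank (A - B) = d"
proof -
  let ?S = "{rank_dist C D | C D. C \<in> X \<and> D \<in> X \<and> C \<noteq> D}"
  have "finite ?S" using finite_rank_dists X unfolding is_MRD_def by blast
  moreover have "?S \<noteq> {}" using assms(2-4) by blast
  ultimately have "Min ?S \<in> ?S" by (rule Min_in)
  then show ?thesis using that X unfolding is_MRD_def min_rank_dist_def rank_dist_def by auto
qed

definition MRD_or_zero :: "nat \<Rightarrow> nat \<Rightarrow> nat \<Rightarrow> 'a::{field,finite} mat set \<Rightarrow> bool" where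
  "MRD_or_zero m N d X \<longleftrightarrow> is_MRD m N d X \<or> X = {0\<^sub>m m N}"

lemma MRD_or_zero_carrier: "MRD_or_zero m N d X \<Longrightarrow> X \<subseteq> carrier_mat m N"
  unfolding MRD_or_zero_def is_MRD_def by auto

lemma MRD_or_zero_rank_dist_ge:
  "MRD_or_zero m N d X \<Longrightarrow> C \<in> X \<Longrightarrow> C' \<in> X \<Longrightarrow> C \<noteq> C' \<Longrightarrow> d \<le> mrank (C - C')"
  unfolding MRD_or_zero_def using is_MRD_rank_dist_ge by auto

lemma sub_sum_row_sp:
  fixes G1 G2 :: "'a::field mat"
  assumes "G1 \<in> carrier_mat m1 n" "G2 \<in> carrier_mat m2 n"
  shows "sub_sum (row_sp G1) (row_sp G2) = vspan n (set (rows G1) \<union> set (rows G2))"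
  using vec_space.sub_sum_span[OF rows_subset_carrier[OF assms(1)] rows_subset_carrier[OF assms(2)]]
    assms by (simp add: row_sp_eq_vspan_rows)

lemma row_sp_neq_if_sub_dim_Un_gt:
  fixes G1 G2 :: "'a::field mat"
  assumes G1: "G1 \<in> carrier_mat r n" and G2: "G2 \<in> carrier_mat m n"
    and gt: "r < sub_dim n (vspan n (set (rows G1) \<union> set (rows G2)))"
  shows "row_sp G1 \<noteq> row_sp G2"
proof
  interpret V: vec_space "TYPE('a)" n .
  note c = rows_subset_carrier[OF G1] rows_subset_carrier[OF G2]
  assume "row_sp G1 = row_sp G2"
  then have "set (rows G2) \<subseteq> vspan n (set (rows G1))"
    using V.in_own_span[OF c(2)] G1 G2 by (simp add: row_sp_eq_vspan_rows)
  then have "set (rows G1) \<union> set (rows G2) \<subseteq> vspan n (set (rows G1))"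
    using V.in_own_span[OF c(1)] by simp
  then have "sub_dim n (vspan n (set (rows G1) \<union> set (rows G2))) \<le> sub_dim n (vspan n (set (rows G1)))"
    using V.sub_dim_span_mono[OF _ Un_least[OF c] _ c(1)] by simp
  then show False using sub_dim_rows_le_dim_row[OF G1] gt by simp
qed

lemma min_inj_dist_row_spaces:
  fixes G :: "'i \<Rightarrow> 'a::field mat"
  assumes G: "\<And>x. x \<in> X \<Longrightarrow> G x \<in> carrier_mat r n"
    and lower: "\<And>x y. x \<in> X \<Longrightarrow> y \<in> X \<Longrightarrow> x \<noteq> y \<Longrightarrow>
      r + d \<le> sub_dim n (vspan n (set (rows (G x)) \<union> set (rows (G y))))"
    and x0: "x0 \<in> X" "y0 \<in> X" "x0 \<noteq> y0"
    and full: "sub_dim n (row_sp (G x0)) = r" "sub_dim n (row_sp (G y0)) = r"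
    and upper: "sub_dim n (vspan n (set (rows (G x0)) \<union> set (rows (G y0)))) \<le> r + d"
    and d: "0 < d"
  shows "min_inj_dist n ((\<lambda>x. row_sp (G x)) ` X) = d"
proof -
  have sum: "sub_sum (row_sp (G x)) (row_sp (G y)) = vspan n (set (rows (G x)) \<union> set (rows (G y)))"
    if "x \<in> X" "y \<in> X" for x y
    using sub_sum_row_sp[OF G G] that by blast
  have dim_le: "sub_dim n (row_sp (G x)) \<le> r" if "x \<in> X" for x
    using sub_dim_rows_le_dim_row[OF G[OF that]] G[OF that] by (simp add: row_sp_eq_vspan_rows)
  have dim_sum_le: "sub_dim n (sub_sum (row_sp (G x)) (row_sp (G y))) \<le> r + r"
    if "x \<in> X" "y \<in> X" for x y
    using vec_space.sub_dim_span_Un_le[OF _ rows_subset_carrier[OF G[OF that(1)]] _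
        rows_subset_carrier[OF G[OF that(2)]]]
      sub_dim_rows_le_dim_row[OF G[OF that(1)]] sub_dim_rows_le_dim_row[OF G[OF that(2)]] sum[OF that]
    by simp
  let ?A = "{inj_dist n U V | U V. U \<in> (\<lambda>x. row_sp (G x)) ` X \<and> V \<in> (\<lambda>x. row_sp (G x)) ` X \<and> U \<noteq> V}"
  have "finite ?A"
  proof (rule finite_subset)
    show "?A \<subseteq> {..r + r}" using dim_sum_le by (fastforce simp: inj_dist_def)
  qed simp
  moreover have "d \<le> a" if "a \<in> ?A" for a
  proof -
    obtain x y where xy: "x \<in> X" "y \<in> X" "row_sp (G x) \<noteq> row_sp (G y)"
      and a: "a = inj_dist n (row_sp (G x)) (row_sp (G y))" using \<open>a \<in> ?A\<close> by blast
    then have "x \<noteq> y" by blast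
    then show ?thesis
      using lower[OF xy(1,2)] sum[OF xy(1,2)] dim_le[OF xy(1)] unfolding a inj_dist_def by simp
  qed
  moreover have "d \<in> ?A"
  proof -
    have "row_sp (G x0) \<noteq> row_sp (G y0)"
      using row_sp_neq_if_sub_dim_Un_gt[OF G[OF x0(1)] G[OF x0(2)]] lower[OF x0] d by simp
    moreover have "inj_dist n (row_sp (G x0)) (row_sp (G y0)) = d"
      using lower[OF x0] upper full sum[OF x0(1,2)] unfolding inj_dist_def by simp
    ultimately show ?thesis using x0 by blast
  qed
  ultimately show ?thesis unfolding min_inj_dist_def by (intro Min_eqI) auto
qed

locale lifted_MRD_construction =
  fixes n r d :: nat
    and M :: "'a::{field,finite} mat set"
    and Cs Ds :: "nat \<Rightarrow> 'a mat set"
  assumes d_pos: "1 \<le> d" and d_le_r: "d \<le> r" and r_le: "2 * r \<le> n"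
    and M_MRD: "is_MRD r (n - r) d M"
    and card_M: "card M = card (UNIV :: 'a set) ^ ((n - r) * (r - d + 1))"
    and Cs_MRD: "\<And>k. 1 \<le> k \<Longrightarrow> k \<le> r div d - 1 \<Longrightarrow> is_MRD (r - k * d) (k * d) d (Cs k)"
    and Cs_last: "Cs (r div d) = {0\<^sub>m (r - (r div d) * d) ((r div d) * d)}"
    and Ds_MRD: "\<And>k. 1 \<le> k \<Longrightarrow> k \<le> r div d \<Longrightarrow> k \<le> (n - r) div d - 1 \<Longrightarrow>
      is_MRD r (n - r - k * d) d (Ds k)"
    and Ds_last: "Ds ((n - r) div d) = {0\<^sub>m r (n - r - ((n - r) div d) * d)}"
begin

text \<open>Level 0 is the lifting of M: with C the empty r \<times> 0 matrix, E^0_{C,D} = I(D).\<close>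

definition C_code :: "nat \<Rightarrow> 'a mat set" where
  "C_code k = (if k = 0 then {0\<^sub>m r 0} else Cs k)"

definition D_code :: "nat \<Rightarrow> 'a mat set" where
  "D_code k = (if k = 0 then M else Ds k)"

definition params :: "(nat \<times> 'a mat \<times> 'a mat) set" where
  "params = {(k, C, D). k \<le> r div d \<and> C \<in> C_code k \<and> D \<in> D_code k}"

fun generator :: "nat \<times> 'a mat \<times> 'a mat \<Rightarrow> 'a mat" where
  "generator (k, C, D) = Ek_matrix (r - k * d) (k * d) C D"

lemma level_le: "k \<le> r div d \<Longrightarrow> k * d \<le> r"
  using mult_le_mono1[of k "r div d" d] div_times_less_eq_dividend[of r d] by linarith

lemma C_code_MRD_or_zero:
  assumes k: "k \<le> r div d"
  shows "MRD_or_zero (r - k * d) (k * d) d (C_code k)"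
proof -
  consider "k = 0" | "1 \<le> k" "k \<le> r div d - 1" | "k = r div d" using k by linarith
  then show ?thesis
    by cases (use Cs_MRD Cs_last in \<open>auto simp: MRD_or_zero_def C_code_def\<close>)
qed

lemma D_code_MRD_or_zero:
  assumes k: "k \<le> r div d"
  shows "MRD_or_zero r (n - r - k * d) d (D_code k)"
proof -
  have "r div d \<le> (n - r) div d" using r_le by (intro div_le_mono) simp
  then consider "k = 0" | "1 \<le> k" "k \<le> (n - r) div d - 1" | "k = (n - r) div d"
    using k by linarith
  then show ?thesis
    by cases (use k M_MRD Ds_MRD Ds_last in \<open>auto simp: MRD_or_zero_def D_code_def\<close>)
qed

lemma params_carrier:
  assumes "(k, C, D) \<in> params"
  shows "k * d \<le> r" "C \<in> carrier_mat (r - k * d) (k * d)" "D \<in> carrier_mat r (n - r - k * d)"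
proof -
  have k: "k \<le> r div d" "C \<in> C_code k" "D \<in> D_code k" using assms by (simp_all add: params_def)
  show "k * d \<le> r" using level_le[OF k(1)] .
  show "C \<in> carrier_mat (r - k * d) (k * d)"
    using MRD_or_zero_carrier[OF C_code_MRD_or_zero[OF k(1)]] k(2) by blast
  show "D \<in> carrier_mat r (n - r - k * d)"
    using MRD_or_zero_carrier[OF D_code_MRD_or_zero[OF k(1)]] k(3) by blast
qed

lemma generator_carrier:
  assumes "x \<in> params"
  shows "generator x \<in> carrier_mat r n"
proof -
  obtain k C D where x: "x = (k, C, D)" by (cases x) auto
  note k = params_carrier[OF assms[unfolded x]]
  have "r - k * d + k * d + k * d + (n - r - k * d) = n" using k(1) r_le by simp
  then show ?thesis using Ek_matrix_carrier[OF k(3), of "r - k * d" "k * d" C] k(1)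
    unfolding x generator.simps by simp
qed

lemma code_eq_row_sp_generator:
  "{lift C | C. C \<in> M} \<union>
    (\<Union>k\<in>{1..r div d}. {Ek_space (r - k * d) (k * d) C D | C D. C \<in> Cs k \<and> D \<in> Ds k})
   = (\<lambda>x. row_sp (generator x)) ` params"
proof -
  have lift: "lift D = row_sp (generator (0, C, D))" if "(0, C, D) \<in> params" for C D
    using lift_eq_row_sp_Ek_matrix params_carrier[OF that] by simp
  have Ek: "Ek_space (r - k * d) (k * d) C D = row_sp (generator (k, C, D))"
    if "(k, C, D) \<in> params" for k C D
  proof -
    have "D \<in> carrier_mat (r - k * d + k * d) (n - r - k * d)"
      using params_carrier[OF that] by simp
    then show ?thesis
      using Ek_space_eq_row_sp_Ek_matrix params_carrier(2)[OF that] by simp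
  qed
  show ?thesis
  proof (intro equalityI subsetI)
    fix U assume "U \<in> {lift C | C. C \<in> M} \<union>
      (\<Union>k\<in>{1..r div d}. {Ek_space (r - k * d) (k * d) C D | C D. C \<in> Cs k \<and> D \<in> Ds k})"
    then consider D where "D \<in> M" "U = lift D"
      | k C D where "k \<in> {1..r div d}" "C \<in> Cs k" "D \<in> Ds k" "U = Ek_space (r - k * d) (k * d) C D"
      by blast
    then show "U \<in> (\<lambda>x. row_sp (generator x)) ` params"
    proof cases
      case 1
      then have p: "(0, 0\<^sub>m r 0, D) \<in> params" by (simp add: params_def C_code_def D_code_def)
      then show ?thesis using lift[OF p] 1 by (intro rev_image_eqI[OF p]) simp
    next
      case 2
      then have p: "(k, C, D) \<in> params" by (simp add: params_def C_code_def D_code_def)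
      then show ?thesis using Ek[OF p] 2 by (intro rev_image_eqI[OF p]) simp
    qed
  next
    fix U assume "U \<in> (\<lambda>x. row_sp (generator x)) ` params"
    then obtain k C D where p: "(k, C, D) \<in> params" and U: "U = row_sp (generator (k, C, D))"
      by auto
    then consider "k = 0" "D \<in> M" | "k \<in> {1..r div d}" "C \<in> Cs k" "D \<in> Ds k"
      by (cases "k = 0") (auto simp: params_def C_code_def D_code_def)
    then show "U \<in> {lift C | C. C \<in> M} \<union>
      (\<Union>k\<in>{1..r div d}. {Ek_space (r - k * d) (k * d) C D | C D. C \<in> Cs k \<and> D \<in> Ds k})"
      by cases (use lift[of C D] Ek[of k C D] p U in auto)
  qed
qed

lemma sub_dim_generators_ge_ordered:
  assumes x: "(k, C, D) \<in> params" and y: "(l, C', D') \<in> params"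
    and ne: "(k, C, D) \<noteq> (l, C', D')" and kl: "k \<le> l"
  shows "r + d \<le>
    sub_dim n (vspan n (set (rows (generator (k, C, D))) \<union> set (rows (generator (l, C', D')))))"
proof -
  note k = params_carrier[OF x] and l = params_carrier[OF y]
  have n: "n = r - k * d + k * d + k * d + (n - r - k * d)" "n = r - l * d + l * d + l * d + (n - r - l * d)"
    using k(1) l(1) r_le by simp_all
  show ?thesis
  proof (cases "k = l")
    case True
    have r: "r - k * d + k * d = r" using k(1) by simp
    have "C \<noteq> C' \<or> D \<noteq> D'" using ne True by simp
    then have "d \<le> max (mrank (C' - C)) (mrank (D' - D))"
      using MRD_or_zero_rank_dist_ge[OF C_code_MRD_or_zero, of k C' C]
        MRD_or_zero_rank_dist_ge[OF D_code_MRD_or_zero, of k D' D] x y True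
      unfolding params_def by auto
    then show ?thesis
      using sub_dim_rows_Ek_matrix_same_shape[of C "r - k * d" "k * d" C' D "n - r - k * d" D' n]
        k l n r True by simp
  next
    case False
    then have "k < l" using kl by simp
    then have "k * d + d \<le> l * d" using mult_le_mono1[of "Suc k" l d] by simp
    moreover have "r + (l * d - k * d) \<le>
        sub_dim n (vspan n (set (rows (generator (k, C, D))) \<union> set (rows (generator (l, C', D')))))"
      unfolding generator.simps
      by (rule sub_dim_rows_Ek_matrix_different_shape[OF k(2) l(2) k(3) l(3) _ _ _ n])
        (use k(1) l(1) \<open>k < l\<close> d_pos in simp_all)
    ultimately show ?thesis by simp
  qed
qed

lemma sub_dim_generators_ge:
  assumes x: "x \<in> params" and y: "y \<in> params" and "x \<noteq> y"
  shows "r + d \<le> sub_dim n (vspan n (set (rows (generator x)) \<union> set (rows (generator y))))"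
proof -
  obtain k C D l C' D' where xy: "x = (k, C, D)" "y = (l, C', D')" by (cases x, cases y) auto
  show ?thesis
  proof (cases "k \<le> l")
    case True
    then show ?thesis using sub_dim_generators_ge_ordered assms unfolding xy by blast
  next
    case False
    then show ?thesis using sub_dim_generators_ge_ordered[of l C' D' k C D] assms
      unfolding xy by (simp add: Un_commute)
  qed
qed

text \<open>The cardinality of M enters the argument only through this lemma.\<close>

lemma two_le_card_M: "2 \<le> card M"
proof -
  have "card {0 :: 'a, 1} \<le> card (UNIV :: 'a set)" by (rule card_mono) auto
  then have q: "2 \<le> card (UNIV :: 'a set)" by simp
  have "1 \<le> (n - r) * (r - d + 1)" using d_pos d_le_r r_le by simp
  then have "card (UNIV :: 'a set) ^ 1 \<le> card M"
    unfolding card_M by (rule power_increasing) (use q in simp)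
  then show ?thesis using q by simp
qed

lemma lifting_distance_attained:
  obtains x y where "x \<in> params" "y \<in> params" "x \<noteq> y"
    "sub_dim n (row_sp (generator x)) = r" "sub_dim n (row_sp (generator y)) = r"
    "sub_dim n (vspan n (set (rows (generator x)) \<union> set (rows (generator y)))) \<le> r + d"
proof -
  have "finite M" using two_le_card_M by (intro card_ge_0_finite) simp
  then obtain D1 D2 where "D1 \<in> M" "D2 \<in> M" "D1 \<noteq> D2"
    using two_le_card_M card_le_Suc0_iff_eq[of M] by fastforce
  then obtain A B where AB: "A \<in> M" "B \<in> M" "A \<noteq> B" "mrank (A - B) = d"
    using is_MRD_rank_dist_attained[OF M_MRD] by metis
  let ?Z = "0\<^sub>m r 0 :: 'a mat"
  have params: "(0, ?Z, B) \<in> params" "(0, ?Z, A) \<in> params"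
    using AB by (simp_all add: params_def C_code_def D_code_def)
  have carrier: "B \<in> carrier_mat r (n - r)" "A \<in> carrier_mat r (n - r)"
    using params_carrier(3)[OF params(1)] params_carrier(3)[OF params(2)] by simp_all
  have n: "n = r + 0 + 0 + (n - r)" "n = r + (n - r)" using r_le by simp_all
  show ?thesis
  proof (rule that[OF params])
    show "(0, ?Z, B) \<noteq> (0, ?Z, A)" using AB by simp
    show "sub_dim n (row_sp (generator (0, ?Z, B))) = r" "sub_dim n (row_sp (generator (0, ?Z, A))) = r"
      using sub_dim_row_sp_Ek_matrix[OF _ n(1)] carrier by simp_all
    show "sub_dim n (vspan n (set (rows (generator (0, ?Z, B))) \<union> set (rows (generator (0, ?Z, A)))))
      \<le> r + d"
      using sub_dim_rows_lift_le[OF carrier n(2)] AB by simp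
  qed
qed

theorem min_inj_dist_eq:
  "min_inj_dist n ({lift C | C. C \<in> M} \<union>
    (\<Union>k\<in>{1..r div d}. {Ek_space (r - k * d) (k * d) C D | C D. C \<in> Cs k \<and> D \<in> Ds k})) = d"
proof -
  obtain x y where "x \<in> params" "y \<in> params" "x \<noteq> y"
    "sub_dim n (row_sp (generator x)) = r" "sub_dim n (row_sp (generator y)) = r"
    "sub_dim n (vspan n (set (rows (generator x)) \<union> set (rows (generator y)))) \<le> r + d"
    by (rule lifting_distance_attained)
  then show ?thesis
    unfolding code_eq_row_sp_generator
    using min_inj_dist_row_spaces[OF generator_carrier sub_dim_generators_ge] d_pos by simp
qed

end

theorem proposition1:
  fixes n r d :: nat
    and M :: "'a::{field,finite} mat set"
    and Cs Ds :: "nat \<Rightarrow> 'a mat set"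
  assumes "1 \<le> d" and "d \<le> r" and "2 * r \<le> n"
    and "is_MRD r (n - r) d M"
    and "card M = card (UNIV :: 'a set) ^ ((n - r) * (r - d + 1))"
    and "\<And>k. 1 \<le> k \<Longrightarrow> k \<le> r div d - 1 \<Longrightarrow> is_MRD (r - k * d) (k * d) d (Cs k)"
    and "Cs (r div d) = {0\<^sub>m (r - (r div d) * d) ((r div d) * d)}"
    and "\<And>k. 1 \<le> k \<Longrightarrow> k \<le> r div d \<Longrightarrow> k \<le> (n - r) div d - 1 \<Longrightarrow>
           is_MRD r (n - r - k * d) d (Ds k)"
    and "Ds ((n - r) div d) = {0\<^sub>m r (n - r - ((n - r) div d) * d)}"
  shows "min_inj_dist n
          ({lift C | C. C \<in> M} \<union>
           (\<Union>k\<in>{1..r div d}. {Ek_space (r - k * d) (k * d) C D | C D. C \<in> Cs k \<and> D \<in> Ds k}))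
         = d"
proof -
  interpret lifted_MRD_construction n r d M Cs Ds
    using assms by unfold_locales
  show ?thesis by (rule min_inj_dist_eq)
qed

end
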